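(* For all $t\in\mathbb N$ and $k\in\mathbb Z$ the sets $A_t(k)$, $B_t(k)$ and $C_t(k)$ are finite unions of arithmetic progressions. Their densities $a_t(k)$, $b_t(k)$ satisfy, for all $t\in\mathbb N$, $k\in\mathbb Z$: \begin{align*} a_{4t}(k)&=\tfrac12\bigl(a_{2t}(k)+b_{2t}(k)\bigr), & b_{4t}(k)&=\tfrac12\bigl(a_{2t}(k)+b_{2t}(k)\bigr),\\ a_{4t+1}(k)&=\tfrac12\bigl(a_{2t}(k)+b_{2t}(k-1)\bigr), & b_{4t+1}(k)&=\tfrac12\bigl(a_{2t+1}(k)+b_{2t+1}(k+1)\bigr),\\ a_{4t+2}(k)&=\tfrac12\bigl(a_{2t+1}(k)+b_{2t+1}(k)\bigr), & b_{4t+2}(k)&=\tfrac12\bigl(a_{2t+1}(k-1)+b_{2t+1}(k+1)\bigr),\\ a_{4t+3}(k)&=\tfrac12\bigl(a_{2t+1}(k-1)+b_{2t+1}(k)\bigr), & b_{4t+3}(k)&=\tfrac12\bigl(a_{2t+2}(k)+b_{2t+2}(k+1)\bigr), \end{align*} with initial conditions $a_0(k)=b_0(k)=1$ if $k=0$ and $0$ otherwise; $a_1(k)=\frac12$ if $k\in\{0,1\}$ and $0$ otherwise; $b_1(k)=0$ for $k>1$, $b_1(1)=\frac14$, and $b_1(k)=3\cdot 2^{k-3}$ for $k<1$.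
   Context: For $n\in\mathbb N=\{0,1,2,\dots\}$ with binary digits $\delta_j(n)$, let $\mathsf r(n)=\#\{j\ge0:\delta_{j+1}(n)=\delta_j(n)=1\}$ (number of occurrences of $\mathtt{11}$ in binary), and $d(t,n)=\mathsf r(n+t)-\mathsf r(n)$. For $t\in\mathbb N$, $k\in\mathbb Z$ define $A_t(k)=\{n\in\mathbb N:d(t,2n)=k\}$, $B_t(k)=\{n\in\mathbb N:d(t,2n+1)=k\}$, $C_t(k)=\{n\in\mathbb N:d(t,n)=k\}$, and let $a_t(k)$, $b_t(k)$ denote the asymptotic densities of $A_t(k)$, $B_t(k)$. *)

theory Defs
  imports Complex_Main
begin

definition r11 :: "nat \<Rightarrow> nat" where
  "r11 n = card {j. bit n (Suc j) \<and> bit n j}"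

definition dd :: "nat \<Rightarrow> nat \<Rightarrow> int" where
  "dd t n = int (r11 (n + t)) - int (r11 n)"

definition Aset :: "nat \<Rightarrow> int \<Rightarrow> nat set" where
  "Aset t k = {n. dd t (2 * n) = k}"

definition Bset :: "nat \<Rightarrow> int \<Rightarrow> nat set" where
  "Bset t k = {n. dd t (2 * n + 1) = k}"

definition Cset :: "nat \<Rightarrow> int \<Rightarrow> nat set" where
  "Cset t k = {n. dd t n = k}"

definition is_arith_prog :: "nat set \<Rightarrow> bool" where
  "is_arith_prog S \<longleftrightarrow> (\<exists>a q. q > 0 \<and> S = {a + q * m | m. True})"

definition finite_union_of_APs :: "nat set \<Rightarrow> bool" where
  "finite_union_of_APs S \<longleftrightarrow>
     (\<exists>F. finite F \<and> (\<forall>P\<in>F. is_arith_prog P) \<and> S = \<Union>F)"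

definition has_density :: "nat set \<Rightarrow> real \<Rightarrow> bool" where
  "has_density S x \<longleftrightarrow> (\<lambda>N. real (card (S \<inter> {..<N})) / real N) \<longlonglongrightarrow> x"

definition density :: "nat set \<Rightarrow> real" where
  "density S = lim (\<lambda>N. real (card (S \<inter> {..<N})) / real N)"

definition dens_a :: "nat \<Rightarrow> int \<Rightarrow> real" where
  "dens_a t k = density (Aset t k)"

definition dens_b :: "nat \<Rightarrow> int \<Rightarrow> real" where
  "dens_b t k = density (Bset t k)"

end

(*
  Appending a binary digit to n and to n + t changes the count of 11-blocks by the
  previous last digit, so d(2s + e, 2n + f) equals d(s, n) or d(s + 1, n) corrected by
  the parities of n and n + s.  Splitting n by parity thus writes each of A_{4t+i}(k),
  B_{4t+i}(k) as an interleaving {2m | m in X} u {2m + 1 | m in Y} of sets A_j(k'), B_j'(k')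
  with j, j' in {2t, 2t + 1, 2t + 2}.  Interleaving preserves finite unions of arithmetic
  progressions and averages densities, so strong induction on t from the explicit sets
  for t = 0, 1 gives everything; the values of b_1 come from b_1(k) = (a_1(k) + b_1(k+1))/2
  and B_1(k) = {} for k > 1.
*)
theory Submission
  imports Defs "HOL-Real_Asymp.Real_Asymp"
begin

lemma bit_nat_imp_less: "bit (n::nat) j \<Longrightarrow> j < n"
  by (metis bit_iff_odd div_less even_zero less_exp order.strict_trans1 not_less)

lemma finite_pairs_of_set_bits: "finite {j. bit (n::nat) (Suc j) \<and> bit n j}"
  by (rule finite_subset[of _ "{..<n}"]) (auto dest: bit_nat_imp_less)

lemma r11_double: "r11 (2 * n) = r11 n"
proof -
  have "{j. bit (2 * n) (Suc j) \<and> bit (2 * n) j} = Suc ` {j. bit n (Suc j) \<and> bit n j}"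
    by (auto simp: bit_double_iff image_iff gr0_conv_Suc)
  then show ?thesis
    unfolding r11_def by (simp add: card_image)
qed

lemma r11_double_plus_one: "r11 (2 * n + 1) = r11 n + of_bool (odd n)"
proof -
  have "{j. bit (2 * n + 1) (Suc j) \<and> bit (2 * n + 1) j}
      = (if odd n then {0} else {}) \<union> Suc ` {j. bit n (Suc j) \<and> bit n j}"
  proof (intro set_eqI)
    fix j show "j \<in> {j. bit (2 * n + 1) (Suc j) \<and> bit (2 * n + 1) j}
        \<longleftrightarrow> j \<in> (if odd n then {0} else {}) \<union> Suc ` {j. bit n (Suc j) \<and> bit n j}"
      by (cases j) (auto simp: bit_Suc bit_0)
  qed
  then show ?thesis
    unfolding r11_def using finite_pairs_of_set_bits[of n] by (simp add: card_image)
qed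

lemma dd_even_even: "dd (2 * s) (2 * n) = dd s n"
  unfolding dd_def by (metis add_mult_distrib2 r11_double)

lemma dd_even_odd:
  "dd (2 * s) (2 * n + 1) = dd s n + of_bool (odd (n + s)) - of_bool (odd n)"
proof -
  have "2 * n + 1 + 2 * s = 2 * (n + s) + 1" by simp
  then show ?thesis unfolding dd_def by (simp only: r11_double_plus_one) simp
qed

lemma dd_odd_even: "dd (2 * s + 1) (2 * n) = dd s n + of_bool (odd (n + s))"
proof -
  have "2 * n + (2 * s + 1) = 2 * (n + s) + 1" by simp
  then show ?thesis unfolding dd_def by (simp only: r11_double_plus_one r11_double) simp
qed

lemma dd_odd_odd: "dd (2 * s + 1) (2 * n + 1) = dd (s + 1) n - of_bool (odd n)"
proof -
  have "2 * n + 1 + (2 * s + 1) = 2 * (n + (s + 1))" by simp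
  then show ?thesis unfolding dd_def by (simp only: r11_double_plus_one r11_double) simp
qed

definition interleave :: "nat set \<Rightarrow> nat set \<Rightarrow> nat set" where
  "interleave X Y = (\<lambda>m. 2 * m) ` X \<union> (\<lambda>m. 2 * m + 1) ` Y"

lemma Collect_eq_interleave: "{n. P n} = interleave {m. P (2 * m)} {m. P (2 * m + 1)}"
proof (intro set_eqI iffI)
  fix n assume "n \<in> {n. P n}"
  then show "n \<in> interleave {m. P (2 * m)} {m. P (2 * m + 1)}"
    unfolding interleave_def by (cases "even n") (auto elim!: evenE oddE)
qed (auto simp: interleave_def)

lemma Collect_eq_interleaveI:
  assumes "\<And>m. P (2 * m) \<longleftrightarrow> m \<in> X" and "\<And>m. P (2 * m + 1) \<longleftrightarrow> m \<in> Y"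
  shows "{n. P n} = interleave X Y"
  using Collect_eq_interleave[of P] assms by (metis Collect_mem_eq Collect_cong)

lemma Cset_eq_interleave: "Cset s k = interleave (Aset s k) (Bset s k)"
  unfolding Cset_def Aset_def Bset_def by (rule Collect_eq_interleave)

lemma Aset_double: "Aset (2 * s) k = Cset s k"
  by (simp add: Aset_def Cset_def dd_even_even)

lemma Bset_double: "Bset (2 * s) k = {n. dd s n + of_bool (odd (n + s)) - of_bool (odd n) = k}"
  unfolding Bset_def dd_even_odd ..

lemma Aset_double_plus_one: "Aset (2 * s + 1) k = {n. dd s n + of_bool (odd (n + s)) = k}"
  unfolding Aset_def dd_odd_even ..

lemma Bset_double_plus_one: "Bset (2 * s + 1) k = {n. dd (s + 1) n - of_bool (odd n) = k}"
  unfolding Bset_def dd_odd_odd ..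

lemma Aset_4t: "Aset (4 * t) k = interleave (Aset (2 * t) k) (Bset (2 * t) k)"
  using Aset_double[of "2 * t" k] by (simp add: Cset_eq_interleave)

lemma Bset_4t: "Bset (4 * t) k = interleave (Aset (2 * t) k) (Bset (2 * t) k)"
proof -
  have "Bset (4 * t) k = {n. dd (2 * t) n = k}"
    using Bset_double[of "2 * t" k] by simp
  then show ?thesis by (simp add: Cset_eq_interleave[unfolded Cset_def])
qed

lemma Aset_4t_plus_1: "Aset (4 * t + 1) k = interleave (Aset (2 * t) k) (Bset (2 * t) (k - 1))"
proof -
  have "Aset (4 * t + 1) k = {n. dd (2 * t) n + of_bool (odd n) = k}"
    using Aset_double_plus_one[of "2 * t" k] by simp
  also have "\<dots> = interleave (Aset (2 * t) k) (Bset (2 * t) (k - 1))"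
    by (rule Collect_eq_interleaveI) (auto simp: Aset_def Bset_def)
  finally show ?thesis .
qed

lemma Bset_4t_plus_1:
  "Bset (4 * t + 1) k = interleave (Aset (2 * t + 1) k) (Bset (2 * t + 1) (k + 1))"
proof -
  have "Bset (4 * t + 1) k = {n. dd (2 * t + 1) n - of_bool (odd n) = k}"
    using Bset_double_plus_one[of "2 * t" k] by simp
  also have "\<dots> = interleave (Aset (2 * t + 1) k) (Bset (2 * t + 1) (k + 1))"
    by (rule Collect_eq_interleaveI) (auto simp: Aset_def Bset_def)
  finally show ?thesis .
qed

lemma Aset_4t_plus_2: "Aset (4 * t + 2) k = interleave (Aset (2 * t + 1) k) (Bset (2 * t + 1) k)"
  using Aset_double[of "2 * t + 1" k] by (simp add: Cset_eq_interleave)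

lemma Bset_4t_plus_2:
  "Bset (4 * t + 2) k = interleave (Aset (2 * t + 1) (k - 1)) (Bset (2 * t + 1) (k + 1))"
proof -
  have "Bset (4 * t + 2) k = {n. dd (2 * t + 1) n + of_bool (even n) - of_bool (odd n) = k}"
    using Bset_double[of "2 * t + 1" k] by simp
  also have "\<dots> = interleave (Aset (2 * t + 1) (k - 1)) (Bset (2 * t + 1) (k + 1))"
    by (rule Collect_eq_interleaveI) (auto simp: Aset_def Bset_def)
  finally show ?thesis .
qed

lemma Aset_4t_plus_3:
  "Aset (4 * t + 3) k = interleave (Aset (2 * t + 1) (k - 1)) (Bset (2 * t + 1) k)"
proof -
  have "Aset (4 * t + 3) k = {n. dd (2 * t + 1) n + of_bool (even n) = k}"
    using Aset_double_plus_one[of "2 * t + 1" k] by (simp add: numeral_3_eq_3 cong: Collect_cong)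
  also have "\<dots> = interleave (Aset (2 * t + 1) (k - 1)) (Bset (2 * t + 1) k)"
    by (rule Collect_eq_interleaveI) (auto simp: Aset_def Bset_def)
  finally show ?thesis .
qed

lemma Bset_4t_plus_3:
  "Bset (4 * t + 3) k = interleave (Aset (2 * t + 2) k) (Bset (2 * t + 2) (k + 1))"
proof -
  have "Bset (4 * t + 3) k = {n. dd (2 * t + 2) n - of_bool (odd n) = k}"
    using Bset_double_plus_one[of "2 * t + 1" k] by (simp add: numeral_3_eq_3 cong: Collect_cong)
  also have "\<dots> = interleave (Aset (2 * t + 2) k) (Bset (2 * t + 2) (k + 1))"
    by (rule Collect_eq_interleaveI) (auto simp: Aset_def Bset_def)
  finally show ?thesis .
qed

lemma is_arith_prog_affine_image:
  fixes c e :: nat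
  assumes "is_arith_prog P" and "c > 0"
  shows "is_arith_prog ((\<lambda>x. c * x + e) ` P)"
proof -
  obtain a q where "q > 0" and P: "P = {a + q * m | m. True}"
    using assms(1) unfolding is_arith_prog_def by blast
  have "(\<lambda>x. c * x + e) ` P = {(c * a + e) + (c * q) * m | m. True}"
  proof (intro set_eqI iffI)
    fix y assume "y \<in> {(c * a + e) + (c * q) * m | m. True}"
    then obtain m where "y = (c * a + e) + (c * q) * m" by blast
    then show "y \<in> (\<lambda>x. c * x + e) ` P"
      unfolding P by (intro image_eqI[where x = "a + q * m"]) (auto simp: algebra_simps)
  qed (auto simp: P algebra_simps)
  moreover have "c * q > 0" using \<open>q > 0\<close> \<open>c > 0\<close> by simp
  ultimately show ?thesis unfolding is_arith_prog_def by blast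
qed

lemma finite_union_of_APs_affine_image:
  fixes c e :: nat
  assumes "finite_union_of_APs X" and "c > 0"
  shows "finite_union_of_APs ((\<lambda>x. c * x + e) ` X)"
proof -
  obtain F where "finite F" "\<forall>P\<in>F. is_arith_prog P" "X = \<Union>F"
    using assms(1) unfolding finite_union_of_APs_def by blast
  then show ?thesis
    unfolding finite_union_of_APs_def using is_arith_prog_affine_image[OF _ \<open>c > 0\<close>]
    by (intro exI[of _ "(`) (\<lambda>x. c * x + e) ` F"]) (auto simp: image_Union)
qed

lemma finite_union_of_APs_Un:
  "finite_union_of_APs X \<Longrightarrow> finite_union_of_APs Y \<Longrightarrow> finite_union_of_APs (X \<union> Y)"
  unfolding finite_union_of_APs_def by (metis Union_Un_distrib finite_UnI Un_iff)

lemma finite_union_of_APs_interleave: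
  "finite_union_of_APs X \<Longrightarrow> finite_union_of_APs Y \<Longrightarrow> finite_union_of_APs (interleave X Y)"
  unfolding interleave_def
  using finite_union_of_APs_affine_image[of X 2 0] finite_union_of_APs_affine_image[of Y 2 1]
  by (simp add: finite_union_of_APs_Un)

lemma card_interleave_lessThan:
  "card (interleave X Y \<inter> {..<N}) = card (X \<inter> {..<(N + 1) div 2}) + card (Y \<inter> {..<N div 2})"
proof -
  have "interleave X Y \<inter> {..<N}
      = (\<lambda>m. 2 * m) ` (X \<inter> {..<(N + 1) div 2}) \<union> (\<lambda>m. 2 * m + 1) ` (Y \<inter> {..<N div 2})"
    unfolding interleave_def by auto
  moreover have "(\<lambda>m. 2 * m) ` A \<inter> (\<lambda>m. 2 * m + 1) ` B = {}" for A B :: "nat set"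
    by auto presburger
  ultimately show ?thesis
    by (simp add: card_Un_disjoint card_image inj_on_def)
qed

lemma tendsto_half_div:
  "(\<lambda>N. real ((N + c) div 2) / real N) \<longlonglongrightarrow> 1 / 2"
proof (rule tendsto_sandwich)
  have "(real N + c - 1) / 2 \<le> real ((N + c) div 2)" for N
  proof -
    have "N + c \<le> 2 * ((N + c) div 2) + 1" by presburger
    then have "real (N + c) \<le> real (2 * ((N + c) div 2) + 1)" by (simp only: of_nat_le_iff)
    then show ?thesis by simp
  qed
  then show "\<forall>\<^sub>F N in sequentially. (real N + c - 1) / 2 / real N \<le> real ((N + c) div 2) / real N"
    by (intro always_eventually allI divide_right_mono) auto
  have "real ((N + c) div 2) \<le> (real N + c) / 2" for N
  proof -
    have "2 * ((N + c) div 2) \<le> N + c" by presburger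
    then have "real (2 * ((N + c) div 2)) \<le> real (N + c)" by (simp only: of_nat_le_iff)
    then show ?thesis by simp
  qed
  then show "\<forall>\<^sub>F N in sequentially. real ((N + c) div 2) / real N \<le> (real N + c) / 2 / real N"
    by (intro always_eventually allI divide_right_mono) auto
  show "(\<lambda>N. (real N + c - 1) / 2 / real N) \<longlonglongrightarrow> 1 / 2" by real_asymp
  show "(\<lambda>N. (real N + c) / 2 / real N) \<longlonglongrightarrow> 1 / 2" by real_asymp
qed

lemma filterlim_half_at_top: "filterlim (\<lambda>N::nat. (N + c) div 2) at_top sequentially"
proof -
  have "Z \<le> (N + c) div 2" if "2 * Z \<le> N" for Z N
    using that by linarith
  then show ?thesis
    unfolding filterlim_at_top eventually_sequentially by blast
qed

lemma tendsto_card_lessThan_rescaled: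
  assumes "has_density X x"
    and "(\<lambda>N. real (h N) / real N) \<longlonglongrightarrow> c" and "filterlim h at_top sequentially"
  shows "(\<lambda>N. real (card (X \<inter> {..<h N})) / real N) \<longlonglongrightarrow> x * c"
proof -
  have eq: "real (card (X \<inter> {..<h N})) / real (h N) * (real (h N) / real N)
      = real (card (X \<inter> {..<h N})) / real N" for N
    by (cases "h N = 0") auto
  have "(\<lambda>N. real (card (X \<inter> {..<h N})) / real (h N)) \<longlonglongrightarrow> x"
    using filterlim_compose[OF assms(1)[unfolded has_density_def] assms(3)] by simp
  then have "(\<lambda>N. real (card (X \<inter> {..<h N})) / real (h N) * (real (h N) / real N)) \<longlonglongrightarrow> x * c"
    using assms(2) by (rule tendsto_mult)
  then show ?thesis unfolding eq .
qed

lemma has_density_interleave: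
  assumes "has_density X x" and "has_density Y y"
  shows "has_density (interleave X Y) ((x + y) / 2)"
proof -
  have "(\<lambda>N. real (card (X \<inter> {..<(N + 1) div 2})) / real N) \<longlonglongrightarrow> x * (1 / 2)"
    using assms(1) tendsto_half_div filterlim_half_at_top by (rule tendsto_card_lessThan_rescaled)
  moreover have "(\<lambda>N. real (card (Y \<inter> {..<(N + 0) div 2})) / real N) \<longlonglongrightarrow> y * (1 / 2)"
    using assms(2) tendsto_half_div filterlim_half_at_top by (rule tendsto_card_lessThan_rescaled)
  ultimately show ?thesis
    unfolding has_density_def card_interleave_lessThan
    by (auto simp: add_divide_distrib intro: tendsto_eq_intros)
qed

lemma density_eqI: "has_density X x \<Longrightarrow> density X = x"
  unfolding has_density_def density_def by (rule limI)

lemma has_density_UNIV: "has_density UNIV 1"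
  unfolding has_density_def
  by (rule Lim_transform_eventually[OF tendsto_const]) (auto intro: eventually_sequentiallyI[of 1])

lemma has_density_empty: "has_density {} 0"
  unfolding has_density_def by simp

lemma finite_union_of_APs_UNIV: "finite_union_of_APs UNIV"
proof -
  have "is_arith_prog UNIV"
    unfolding is_arith_prog_def by (intro exI[of _ 0] exI[of _ 1]) auto
  then show ?thesis
    unfolding finite_union_of_APs_def by (intro exI[of _ "{UNIV}"]) auto
qed

lemma finite_union_of_APs_empty: "finite_union_of_APs {}"
  unfolding finite_union_of_APs_def by (intro exI[of _ "{}"]) auto

definition ap_union_with_density :: "nat set \<Rightarrow> bool" where
  "ap_union_with_density X \<longleftrightarrow> finite_union_of_APs X \<and> (\<exists>x. has_density X x)"

lemma ap_union_with_density_interleave: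
  "ap_union_with_density X \<Longrightarrow> ap_union_with_density Y \<Longrightarrow> ap_union_with_density (interleave X Y)"
  unfolding ap_union_with_density_def
  using finite_union_of_APs_interleave has_density_interleave by blast

lemma ap_union_with_density_UNIV: "ap_union_with_density UNIV"
  unfolding ap_union_with_density_def
  using finite_union_of_APs_UNIV has_density_UNIV by blast

lemma ap_union_with_density_empty: "ap_union_with_density {}"
  unfolding ap_union_with_density_def
  using finite_union_of_APs_empty has_density_empty by blast

lemma dd_0: "dd 0 n = 0"
  unfolding dd_def by simp

lemma Aset_0: "Aset 0 k = (if k = 0 then UNIV else {})"
  unfolding Aset_def by (simp add: dd_0)

lemma Bset_0: "Bset 0 k = (if k = 0 then UNIV else {})"
  unfolding Bset_def by (simp add: dd_0)

lemma Aset_1: "Aset 1 k = interleave (Aset 0 k) (Bset 0 (k - 1))"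
  using Aset_4t_plus_1[of 0 k] by simp

lemma Bset_1: "Bset 1 k = interleave (Aset 1 k) (Bset 1 (k + 1))"
  using Bset_4t_plus_1[of 0 k] by simp

lemma dd_1_le: "dd 1 n \<le> 1"
proof (induction n rule: less_induct)
  case (less n)
  show ?case
  proof (cases "even n")
    case True
    then obtain m where "n = 2 * m" by (elim evenE)
    then show ?thesis using dd_odd_even[of 0 m] by (simp add: dd_0)
  next
    case False
    then obtain m where n: "n = 2 * m + 1" by (elim oddE)
    then have "dd 1 m \<le> 1" using less by simp
    then show ?thesis using dd_odd_odd[of 0 m] n by simp
  qed
qed

lemma Bset_1_eq_empty:
  assumes "k > 1"
  shows "Bset 1 k = {}"
proof -
  have "dd 1 (2 * n + 1) \<noteq> k" for n
    using dd_1_le[of "2 * n + 1"] assms by linarith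
  then show ?thesis unfolding Bset_def by auto
qed

lemma ap_union_with_density_Aset_1: "ap_union_with_density (Aset 1 k)"
  unfolding Aset_1 Aset_0 Bset_0
  by (intro ap_union_with_density_interleave)
    (simp_all add: ap_union_with_density_UNIV ap_union_with_density_empty)

lemma ap_union_with_density_Bset_1: "ap_union_with_density (Bset 1 k)"
proof (cases "k > 1")
  case True
  \<comment> \<open>\<open>simp only\<close>: the full simpset would rewrite the index \<open>1\<close> to \<open>Suc 0\<close> first\<close>
  then show ?thesis by (simp only: Bset_1_eq_empty ap_union_with_density_empty)
next
  case False
  then have "k \<le> 2" by simp
  then show ?thesis
  proof (induction k rule: int_le_induct)
    case base
    show ?case by (simp only: Bset_1_eq_empty ap_union_with_density_empty)
  next
    case (step i)
    then show ?case
      using Bset_1[of "i - 1"] ap_union_with_density_Aset_1 ap_union_with_density_interleave by simp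
  qed
qed

lemma ap_union_with_density_Aset_Bset:
  "ap_union_with_density (Aset t k) \<and> ap_union_with_density (Bset t k)"
proof (induction t arbitrary: k rule: less_induct)
  case (less t)
  note IH = less[THEN conjunct1] less[THEN conjunct2]
  note step = ap_union_with_density_interleave
  consider "t = 0" | "t = 1" | s where "t = 4 * s" "s > 0" | s where "t = 4 * s + 1" "s > 0"
    | s where "t = 4 * s + 2" | s where "t = 4 * s + 3"
    by atomize_elim presburger
  then show ?case
  proof cases
    case 1
    then show ?thesis by (simp add: Aset_0 Bset_0 ap_union_with_density_UNIV ap_union_with_density_empty)
  next
    case 2
    then show ?thesis using ap_union_with_density_Aset_1 ap_union_with_density_Bset_1 by simp
  next
    case (3 s)
    show ?thesis unfolding \<open>t = 4 * s\<close> Aset_4t Bset_4t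
      using 3 IH[of "2 * s"] step by simp
  next
    case (4 s)
    show ?thesis unfolding \<open>t = 4 * s + 1\<close> Aset_4t_plus_1 Bset_4t_plus_1
      using 4 IH[of "2 * s"] IH[of "2 * s + 1"] step by simp
  next
    case (5 s)
    show ?thesis unfolding \<open>t = 4 * s + 2\<close> Aset_4t_plus_2 Bset_4t_plus_2
      using 5 IH[of "2 * s + 1"] step by simp
  next
    case (6 s)
    show ?thesis unfolding \<open>t = 4 * s + 3\<close> Aset_4t_plus_3 Bset_4t_plus_3
      using 6 IH[of "2 * s + 1"] IH[of "2 * s + 2"] step by simp
  qed
qed

lemma has_density_Aset: "has_density (Aset t k) (dens_a t k)"
  using ap_union_with_density_Aset_Bset[of t k]
  unfolding ap_union_with_density_def dens_a_def by (metis density_eqI)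

lemma has_density_Bset: "has_density (Bset t k) (dens_b t k)"
  using ap_union_with_density_Aset_Bset[of t k]
  unfolding ap_union_with_density_def dens_b_def by (metis density_eqI)

lemma density_interleave_Aset_Bset:
  "density (interleave (Aset t k) (Bset t' k')) = (dens_a t k + dens_b t' k') / 2"
  using has_density_interleave[OF has_density_Aset has_density_Bset] by (rule density_eqI)

lemma dens_a_eq_if_interleave:
  "Aset t k = interleave (Aset j l) (Bset j' l') \<Longrightarrow> dens_a t k = (dens_a j l + dens_b j' l') / 2"
  unfolding dens_a_def[of t k] by (simp add: density_interleave_Aset_Bset)

lemma dens_b_eq_if_interleave:
  "Bset t k = interleave (Aset j l) (Bset j' l') \<Longrightarrow> dens_b t k = (dens_a j l + dens_b j' l') / 2"
  unfolding dens_b_def[of t k] by (simp add: density_interleave_Aset_Bset)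

lemma dens_recurrences:
  "dens_a (4*t) k = (dens_a (2*t) k + dens_b (2*t) k) / 2
 \<and> dens_b (4*t) k = (dens_a (2*t) k + dens_b (2*t) k) / 2
 \<and> dens_a (4*t+1) k = (dens_a (2*t) k + dens_b (2*t) (k-1)) / 2
 \<and> dens_b (4*t+1) k = (dens_a (2*t+1) k + dens_b (2*t+1) (k+1)) / 2
 \<and> dens_a (4*t+2) k = (dens_a (2*t+1) k + dens_b (2*t+1) k) / 2
 \<and> dens_b (4*t+2) k = (dens_a (2*t+1) (k-1) + dens_b (2*t+1) (k+1)) / 2
 \<and> dens_a (4*t+3) k = (dens_a (2*t+1) (k-1) + dens_b (2*t+1) k) / 2
 \<and> dens_b (4*t+3) k = (dens_a (2*t+2) k + dens_b (2*t+2) (k+1)) / 2"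
  by (intro conjI dens_a_eq_if_interleave dens_b_eq_if_interleave
      Aset_4t Bset_4t Aset_4t_plus_1 Bset_4t_plus_1 Aset_4t_plus_2 Bset_4t_plus_2
      Aset_4t_plus_3 Bset_4t_plus_3)

lemma dens_a_0: "dens_a 0 k = (if k = 0 then 1 else 0)"
  unfolding dens_a_def Aset_0 using density_eqI[OF has_density_UNIV] density_eqI[OF has_density_empty]
  by simp

lemma dens_b_0: "dens_b 0 k = (if k = 0 then 1 else 0)"
  unfolding dens_b_def Bset_0 using density_eqI[OF has_density_UNIV] density_eqI[OF has_density_empty]
  by simp

lemma dens_a_1: "dens_a 1 k = (if k \<in> {0, 1} then 1 / 2 else 0)"
  using dens_a_eq_if_interleave[OF Aset_1[of k]] by (auto simp: dens_a_0 dens_b_0)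

lemma dens_b_1_gt_1: "k > 1 \<Longrightarrow> dens_b 1 k = 0"
  unfolding dens_b_def by (simp only: Bset_1_eq_empty density_eqI[OF has_density_empty])

lemma dens_b_1_1: "dens_b 1 1 = 1 / 4"
  using dens_b_eq_if_interleave[OF Bset_1, of 1] dens_a_1[of 1] dens_b_1_gt_1[of 2] by simp

lemma dens_b_1_lt_1:
  assumes "k < 1"
  shows "dens_b 1 k = 3 * 2 powr (real_of_int k - 3)"
proof -
  from assms have "k \<le> 0" by simp
  then show ?thesis
  proof (induction k rule: int_le_induct)
    case base
    then show ?case
      using dens_b_eq_if_interleave[OF Bset_1, of 0] dens_a_1[of 0] dens_b_1_1
      by (simp add: powr_minus_divide)
  next
    case (step i)
    then show ?case
      using dens_b_eq_if_interleave[OF Bset_1, of "i - 1"] dens_a_1[of "i - 1"]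
      by (simp add: powr_diff)
  qed
qed

theorem proposition3p2:
  shows "(\<forall>t k. finite_union_of_APs (Aset t k) \<and> finite_union_of_APs (Bset t k)
                \<and> finite_union_of_APs (Cset t k))
     \<and> (\<forall>t k. has_density (Aset t k) (dens_a t k) \<and> has_density (Bset t k) (dens_b t k))
     \<and> (\<forall>(t::nat) (k::int).
          dens_a (4*t) k = (dens_a (2*t) k + dens_b (2*t) k) / 2
        \<and> dens_b (4*t) k = (dens_a (2*t) k + dens_b (2*t) k) / 2
        \<and> dens_a (4*t+1) k = (dens_a (2*t) k + dens_b (2*t) (k-1)) / 2
        \<and> dens_b (4*t+1) k = (dens_a (2*t+1) k + dens_b (2*t+1) (k+1)) / 2
        \<and> dens_a (4*t+2) k = (dens_a (2*t+1) k + dens_b (2*t+1) k) / 2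
        \<and> dens_b (4*t+2) k = (dens_a (2*t+1) (k-1) + dens_b (2*t+1) (k+1)) / 2
        \<and> dens_a (4*t+3) k = (dens_a (2*t+1) (k-1) + dens_b (2*t+1) k) / 2
        \<and> dens_b (4*t+3) k = (dens_a (2*t+2) k + dens_b (2*t+2) (k+1)) / 2)
     \<and> (\<forall>k::int. dens_a 0 k = (if k = 0 then 1 else 0) \<and> dens_b 0 k = (if k = 0 then 1 else 0))
     \<and> (\<forall>k::int. dens_a 1 k = (if k \<in> {0, 1} then 1/2 else 0))
     \<and> (\<forall>k::int. k > 1 \<longrightarrow> dens_b 1 k = 0)
     \<and> dens_b 1 1 = 1/4
     \<and> (\<forall>k::int. k < 1 \<longrightarrow> dens_b 1 k = 3 * 2 powr (real_of_int k - 3))"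
proof -
  have "finite_union_of_APs (Aset t k) \<and> finite_union_of_APs (Bset t k)" for t k
    using ap_union_with_density_Aset_Bset unfolding ap_union_with_density_def by blast
  moreover have "finite_union_of_APs (Cset t k)" for t k
    unfolding Cset_eq_interleave using calculation by (blast intro: finite_union_of_APs_interleave)
  ultimately show ?thesis
    using has_density_Aset has_density_Bset dens_recurrences dens_a_0 dens_b_0 dens_a_1
      dens_b_1_gt_1 dens_b_1_1 dens_b_1_lt_1
    by blast
qed

end
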